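(* Let $n\geq 3$ and let $T$ be the $n\times n$ symmetric tridiagonal matrix with diagonal entries $T_{ii}=a_i\geq 0$ ($1\le i\le n$), off-diagonal entries $T_{j,j+1}=T_{j+1,j}=b_j\geq 0$ ($1\le j\le n-1$), and all other entries zero. Then $T$ is infinitely divisible if and only if $T$ is positive semidefinite and $b_ib_{i+1}=0$ for every $i\in\{1,2,\ldots,n-2\}$.
   Context: For a nonnegative matrix $A=[a_{ij}]$ and $r>0$, the Hadamard power is $A^{\circ r}=[a_{ij}^r]$. A nonnegative symmetric matrix $A$ is infinitely divisible if $A^{\circ r}$ is positive semidefinite for every $r>0$. *)

theory Defs
  imports "HOL-Analysis.Analysis"
begin

text \<open>Real n x n matrices are represented as functions nat => nat => real,
  with indices ranging over 1..n (entries outside are irrelevant).\<close>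

definition psd :: "nat \<Rightarrow> (nat \<Rightarrow> nat \<Rightarrow> real) \<Rightarrow> bool" where
  "psd n A \<longleftrightarrow> (\<forall>i\<in>{1..n}. \<forall>j\<in>{1..n}. A i j = A j i) \<and>
     (\<forall>x :: nat \<Rightarrow> real. 0 \<le> (\<Sum>i=1..n. \<Sum>j=1..n. x i * A i j * x j))"

definition hadamard_pow :: "real \<Rightarrow> (nat \<Rightarrow> nat \<Rightarrow> real) \<Rightarrow> (nat \<Rightarrow> nat \<Rightarrow> real)" where
  "hadamard_pow r A = (\<lambda>i j. A i j powr r)"

definition infinitely_divisible :: "nat \<Rightarrow> (nat \<Rightarrow> nat \<Rightarrow> real) \<Rightarrow> bool" where
  "infinitely_divisible n A \<longleftrightarrow>
     (\<forall>i\<in>{1..n}. \<forall>j\<in>{1..n}. 0 \<le> A i j \<and> A i j = A j i) \<and>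
     (\<forall>r::real. r > 0 \<longrightarrow> psd n (hadamard_pow r A))"

definition tridiag :: "(nat \<Rightarrow> real) \<Rightarrow> (nat \<Rightarrow> real) \<Rightarrow> (nat \<Rightarrow> nat \<Rightarrow> real)" where
  "tridiag a b = (\<lambda>i j. if i = j then a i else if j = i + 1 then b i
                        else if i = j + 1 then b j else 0)"

end

theory Submission
  imports Defs
begin

text \<open>As \<open>r \<rightarrow> 0\<^sup>+\<close>, every positive entry of \<open>T\<^sup>\<circ>\<^sup>r\<close> tends to 1 and every zero entry stays 0.
  If \<open>b\<^sub>i, b\<^sub>i\<^sub>+\<^sub>1 > 0\<close>, the vector \<open>(1, -1, 1)\<close> placed at \<open>i, i+1, i+2\<close> therefore
  gives \<open>T\<^sup>\<circ>\<^sup>r\<close> a quadratic form tending to at most \<open>3 - 4 < 0\<close>, so \<open>T\<close> is not infinitely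
  divisible. Conversely, if no two consecutive \<open>b\<^sub>i\<close> are nonzero, the quadratic form of a
  tridiagonal matrix splits into independent \<open>1\<times>1\<close> and \<open>2\<times>2\<close> blocks, and it is nonnegative
  as soon as its diagonal and its \<open>2\<times>2\<close> principal minors are; these conditions survive
  Hadamard powers because \<open>(b\<^sup>r)\<^sup>2 = (b\<^sup>2)\<^sup>r \<le> (a a')\<^sup>r\<close>.\<close>

lemma psd_cong:
  assumes "\<forall>i\<in>{1..n}. \<forall>j\<in>{1..n}. A i j = B i j"
  shows "psd n A \<longleftrightarrow> psd n B"
  unfolding psd_def using assms by (auto intro!: sum.cong)

lemma infinitely_divisible_imp_psd:
  assumes "infinitely_divisible n A"
  shows "psd n A"
proof -
  have "psd n (hadamard_pow 1 A)"
    using assms unfolding infinitely_divisible_def by simp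
  moreover have "\<forall>i\<in>{1..n}. \<forall>j\<in>{1..n}. hadamard_pow 1 A i j = A i j"
    using assms by (simp add: infinitely_divisible_def hadamard_pow_def)
  ultimately show ?thesis
    using psd_cong by blast
qed

lemma binary_form_nonneg_iff:
  fixes c e d :: real
  shows "(\<forall>u v. 0 \<le> c * u\<^sup>2 + e * v\<^sup>2 + 2 * d * u * v) \<longleftrightarrow> 0 \<le> c \<and> 0 \<le> e \<and> d\<^sup>2 \<le> c * e"
proof
  assume form: "\<forall>u v. 0 \<le> c * u\<^sup>2 + e * v\<^sup>2 + 2 * d * u * v"
  have c: "0 \<le> c" and e: "0 \<le> e"
    using form[rule_format, of 1 0] form[rule_format, of 0 1] by simp_all
  show "0 \<le> c \<and> 0 \<le> e \<and> d\<^sup>2 \<le> c * e"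
  proof (cases "c = 0")
    case True
    have "(e + 4) * d\<^sup>2 \<le> 0"
      using form[rule_format, of "-(e + 2)" d] True by (simp add: power2_eq_square algebra_simps)
    then have "d\<^sup>2 \<le> 0"
      using e by (simp add: mult_le_0_iff)
    then show ?thesis
      using True e by simp
  next
    case False
    have "0 \<le> c * (c * e - d\<^sup>2)"
      using form[rule_format, of d "-c"] by (simp add: power2_eq_square algebra_simps)
    then show ?thesis
      using c e False by (simp add: zero_le_mult_iff)
  qed
next
  assume minors: "0 \<le> c \<and> 0 \<le> e \<and> d\<^sup>2 \<le> c * e"
  show "\<forall>u v. 0 \<le> c * u\<^sup>2 + e * v\<^sup>2 + 2 * d * u * v"
  proof (intro allI)
    fix u v :: real
    show "0 \<le> c * u\<^sup>2 + e * v\<^sup>2 + 2 * d * u * v"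
    proof (cases "c = 0")
      case True
      then show ?thesis
        using minors by simp
    next
      case False
      have "c * (c * u\<^sup>2 + e * v\<^sup>2 + 2 * d * u * v) = (c * u + d * v)\<^sup>2 + (c * e - d\<^sup>2) * v\<^sup>2"
        by (simp add: power2_eq_square algebra_simps)
      also have "\<dots> \<ge> 0"
        using minors by simp
      finally show ?thesis
        using minors False by (simp add: zero_le_mult_iff)
    qed
  qed
qed

definition tridiag_form :: "(nat \<Rightarrow> real) \<Rightarrow> (nat \<Rightarrow> real) \<Rightarrow> nat \<Rightarrow> (nat \<Rightarrow> real) \<Rightarrow> real" where
  "tridiag_form c d n x = (\<Sum>i=1..n. c i * (x i)\<^sup>2) + 2 * (\<Sum>i=1..<n. d i * x i * x (Suc i))"

lemma tridiag_form_Suc: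
  "tridiag_form c d (Suc n) x = tridiag_form c d n x + c (Suc n) * (x (Suc n))\<^sup>2
     + (if 1 \<le> n then 2 * d n * x n * x (Suc n) else 0)"
  unfolding tridiag_form_def by (simp add: sum.atLeastLessThan_Suc algebra_simps)

lemma quadratic_form_tridiag:
  "(\<Sum>i=1..n. \<Sum>j=1..n. x i * tridiag c d i j * x j) = tridiag_form c d n x"
proof (induction n)
  case 0
  then show ?case
    by (simp add: tridiag_form_def)
next
  case (Suc n)
  have last_column: "(\<Sum>i=1..n. x i * tridiag c d i (Suc n) * x (Suc n))
      = (if 1 \<le> n then d n * x n * x (Suc n) else 0)"
    by (subst sum.mono_neutral_right[where S="{n} \<inter> {1..n}"]) (auto simp: tridiag_def)
  have last_row: "(\<Sum>j=1..n. x (Suc n) * tridiag c d (Suc n) j * x j)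
      = (if 1 \<le> n then d n * x n * x (Suc n) else 0)"
    by (subst sum.mono_neutral_right[where S="{n} \<inter> {1..n}"]) (auto simp: tridiag_def)
  have "(\<Sum>i=1..Suc n. \<Sum>j=1..Suc n. x i * tridiag c d i j * x j)
     = (\<Sum>i=1..n. \<Sum>j=1..n. x i * tridiag c d i j * x j)
       + (\<Sum>i=1..n. x i * tridiag c d i (Suc n) * x (Suc n))
       + (\<Sum>j=1..n. x (Suc n) * tridiag c d (Suc n) j * x j)
       + x (Suc n) * tridiag c d (Suc n) (Suc n) * x (Suc n)"
    by (simp add: sum.distrib)
  also have "\<dots> = tridiag_form c d (Suc n) x"
    unfolding last_column last_row Suc tridiag_form_Suc
    by (simp add: tridiag_def power2_eq_square)
  finally show ?case .
qed

lemma psd_tridiag_iff: "psd n (tridiag c d) \<longleftrightarrow> (\<forall>x. 0 \<le> tridiag_form c d n x)"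
  unfolding psd_def quadratic_form_tridiag by (auto simp: tridiag_def)

lemma hadamard_pow_tridiag:
  "hadamard_pow r (tridiag a b) = tridiag (\<lambda>i. a i powr r) (\<lambda>i. b i powr r)"
  by (auto simp: hadamard_pow_def tridiag_def fun_eq_iff)

lemma tridiag_form_window:
  assumes support: "\<And>i. x i \<noteq> 0 \<Longrightarrow> i \<in> {j..k}" and "1 \<le> j" "k \<le> n"
  shows "tridiag_form c d n x = (\<Sum>i=j..k. c i * (x i)\<^sup>2) + 2 * (\<Sum>i=j..<k. d i * x i * x (Suc i))"
proof -
  have "(\<Sum>i=1..n. c i * (x i)\<^sup>2) = (\<Sum>i=j..k. c i * (x i)\<^sup>2)"
    using assms by (intro sum.mono_neutral_right) force+
  moreover have "(\<Sum>i=1..<n. d i * x i * x (Suc i)) = (\<Sum>i=j..<k. d i * x i * x (Suc i))"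
  proof (intro sum.mono_neutral_right ballI)
    fix i assume "i \<in> {1..<n} - {j..<k}"
    then have "x i = 0 \<or> x (Suc i) = 0"
      using support by fastforce
    then show "d i * x i * x (Suc i) = 0"
      by auto
  qed (use assms in auto)
  ultimately show ?thesis
    unfolding tridiag_form_def by simp
qed

lemma tridiag_form_pair:
  assumes "j \<in> {1..<n}"
  shows "tridiag_form c d n (\<lambda>i. if i = j then u else if i = Suc j then v else 0)
     = c j * u\<^sup>2 + c (Suc j) * v\<^sup>2 + 2 * d j * u * v"
  using assms by (subst tridiag_form_window[where j = j and k = "Suc j"]) (auto split: if_splits)

lemma tridiag_form_alternating_triple:
  assumes "j \<in> {1..n-2}"
  shows "tridiag_form c d n (\<lambda>i. if i = j \<or> i = j + 2 then 1 else if i = j + 1 then -1 else 0)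
     = c j + c (j + 1) + c (j + 2) - 2 * d j - 2 * d (j + 1)"
  using assms by (subst tridiag_form_window[where j = j and k = "j + 2"]) (auto simp: numeral_2_eq_2 split: if_splits)

lemma psd_tridiag_minor:
  assumes "psd n (tridiag c d)" "j \<in> {1..<n}"
  shows "(d j)\<^sup>2 \<le> c j * c (Suc j)"
proof -
  have "\<forall>u v. 0 \<le> c j * u\<^sup>2 + c (Suc j) * v\<^sup>2 + 2 * d j * u * v"
  proof (intro allI)
    fix u v
    have "0 \<le> tridiag_form c d n (\<lambda>i. if i = j then u else if i = Suc j then v else 0)"
      using assms(1) unfolding psd_tridiag_iff ..
    then show "0 \<le> c j * u\<^sup>2 + c (Suc j) * v\<^sup>2 + 2 * d j * u * v"
      unfolding tridiag_form_pair[OF assms(2)] .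
  qed
  then show ?thesis
    unfolding binary_form_nonneg_iff by simp
qed

lemma tridiag_form_nonneg:
  assumes "\<forall>i\<in>{1..n}. 0 \<le> c i"
    and "\<forall>j\<in>{1..<n}. (d j)\<^sup>2 \<le> c j * c (Suc j)"
    and "\<forall>j\<in>{1..n-2}. d j * d (Suc j) = 0"
  shows "0 \<le> tridiag_form c d n x"
  using assms
proof (induction n rule: less_induct)
  case (less n)
  consider "n = 0" | m where "n = Suc m" "m = 0 \<or> d m = 0"
    | k where "n = Suc (Suc k)" "d (Suc k) \<noteq> 0"
    by (metis old.nat.exhaust)
  then show ?case
  proof cases
    case 1
    then show ?thesis
      by (simp add: tridiag_form_def)
  next
    case (2 m)
    have "\<forall>j\<in>{1..m-2}. d j * d (Suc j) = 0"
      using less.prems(3) 2 by auto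
    then have "0 \<le> tridiag_form c d m x"
      using less.IH[of m] less.prems 2 by auto
    then show ?thesis
      using less.prems 2 by (auto simp: tridiag_form_Suc)
  next
    case (3 k)
    have "\<forall>j\<in>{1..k-2}. d j * d (Suc j) = 0"
      using less.prems(3) 3 by auto
    then have "0 \<le> tridiag_form c d k x"
      using less.IH[of k] less.prems 3 by auto
    moreover have "1 \<le> k \<Longrightarrow> d k = 0"
      using less.prems(3) 3 by auto
    moreover have "0 \<le> c (Suc k) * (x (Suc k))\<^sup>2 + c n * (x n)\<^sup>2 + 2 * d (Suc k) * x (Suc k) * x n"
    proof -
      have "0 \<le> c (Suc k) \<and> 0 \<le> c n \<and> (d (Suc k))\<^sup>2 \<le> c (Suc k) * c n"
        using less.prems 3 by auto
      then show ?thesis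
        unfolding binary_form_nonneg_iff[symmetric] by blast
    qed
    ultimately show ?thesis
      using 3 by (auto simp: tridiag_form_Suc)
  qed
qed

lemma psd_tridiag_iff_minors:
  assumes "\<forall>i\<in>{1..n}. 0 \<le> c i"
    and "\<forall>j\<in>{1..n-2}. d j * d (Suc j) = 0"
  shows "psd n (tridiag c d) \<longleftrightarrow> (\<forall>j\<in>{1..<n}. (d j)\<^sup>2 \<le> c j * c (Suc j))"
proof
  assume "psd n (tridiag c d)"
  then show "\<forall>j\<in>{1..<n}. (d j)\<^sup>2 \<le> c j * c (Suc j)"
    by (intro ballI psd_tridiag_minor)
next
  assume "\<forall>j\<in>{1..<n}. (d j)\<^sup>2 \<le> c j * c (Suc j)"
  then show "psd n (tridiag c d)"
    unfolding psd_tridiag_iff by (intro allI tridiag_form_nonneg[OF assms(1) _ assms(2)])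
qed

lemma tendsto_powr_at_right_0:
  fixes x :: real
  assumes "0 \<le> x"
  shows "((\<lambda>r. x powr r) \<longlongrightarrow> (if x = 0 then 0 else 1)) (at_right 0)"
proof (cases "x = 0")
  case False
  have "((\<lambda>r. x powr r) \<longlongrightarrow> x powr 0) (at_right 0)"
    by (rule tendsto_powr[OF tendsto_const tendsto_ident_at False])
  with False show ?thesis
    by simp
qed simp

lemma infinitely_divisible_tridiag_offdiag_mult_eq_0:
  assumes ID: "infinitely_divisible n (tridiag a b)" and j: "j \<in> {1..n-2}"
  shows "b j * b (j + 1) = 0"
proof (rule ccontr)
  assume "b j * b (j + 1) \<noteq> 0"
  have entries: "0 \<le> tridiag a b i k" if "i \<in> {1..n}" "k \<in> {1..n}" for i k
    using ID that unfolding infinitely_divisible_def by blast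
  have a: "0 \<le> a j" "0 \<le> a (j + 1)" "0 \<le> a (j + 2)"
    using entries[of j j] entries[of "j + 1" "j + 1"] entries[of "j + 2" "j + 2"] j
    by (auto simp: tridiag_def)
  have "0 \<le> b j" "0 \<le> b (j + 1)"
    using entries[of j "j + 1"] entries[of "j + 1" "j + 2"] j by (auto simp: tridiag_def)
  with \<open>b j * b (j + 1) \<noteq> 0\<close> have b: "0 < b j" "0 < b (j + 1)"
    by auto
  define f where "f r = a j powr r + a (j + 1) powr r + a (j + 2) powr r
    - 2 * b j powr r - 2 * b (j + 1) powr r" for r
  define L :: real where "L = (if a j = 0 then 0 else 1) + (if a (j + 1) = 0 then 0 else 1)
    + (if a (j + 2) = 0 then 0 else 1) - 2 * 1 - 2 * 1"
  have "((\<lambda>r. b j powr r) \<longlongrightarrow> 1) (at_right 0)" "((\<lambda>r. b (j + 1) powr r) \<longlongrightarrow> 1) (at_right 0)"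
    using b tendsto_powr_at_right_0[of "b j"] tendsto_powr_at_right_0[of "b (j + 1)"] by simp_all
  then have "(f \<longlongrightarrow> L) (at_right 0)"
    unfolding f_def L_def using a
    by (intro tendsto_diff tendsto_add tendsto_mult tendsto_const tendsto_powr_at_right_0)
  moreover have "L < 0"
    unfolding L_def by simp
  ultimately have "\<forall>\<^sub>F r in at_right 0. 0 < r \<and> f r < 0"
    using eventually_at_right_less order_tendstoD(2) eventually_conj by blast
  then obtain r where r: "0 < r" "f r < 0"
    using eventually_happens' trivial_limit_at_right_real by blast
  have "psd n (tridiag (\<lambda>i. a i powr r) (\<lambda>i. b i powr r))"
    using ID r(1) unfolding infinitely_divisible_def hadamard_pow_tridiag by blast
  then have "0 \<le> tridiag_form (\<lambda>i. a i powr r) (\<lambda>i. b i powr r) n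
      (\<lambda>i. if i = j \<or> i = j + 2 then 1 else if i = j + 1 then -1 else 0)"
    unfolding psd_tridiag_iff ..
  then have "0 \<le> f r"
    unfolding f_def tridiag_form_alternating_triple[OF j] .
  with r(2) show False
    by simp
qed

lemma psd_hadamard_pow_tridiag:
  assumes "psd n (tridiag a b)" and "\<forall>j\<in>{1..n-2}. b j * b (Suc j) = 0"
    and "\<forall>i\<in>{1..n}. 0 \<le> a i" and "\<forall>j\<in>{1..<n}. 0 \<le> b j" and "0 < r"
  shows "psd n (hadamard_pow r (tridiag a b))"
  unfolding hadamard_pow_tridiag
proof (subst psd_tridiag_iff_minors)
  have minors: "\<forall>j\<in>{1..<n}. (b j)\<^sup>2 \<le> a j * a (Suc j)"
    using assms(1) psd_tridiag_iff_minors[OF assms(3,2)] by simp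
  show "\<forall>j\<in>{1..<n}. (b j powr r)\<^sup>2 \<le> a j powr r * a (Suc j) powr r"
  proof
    fix j assume j: "j \<in> {1..<n}"
    have "(b j powr r)\<^sup>2 = ((b j)\<^sup>2) powr r"
      using j assms(4) by (simp add: power2_eq_square powr_mult)
    also have "\<dots> \<le> (a j * a (Suc j)) powr r"
      using minors j assms(5) by (simp add: powr_mono2)
    also have "\<dots> = a j powr r * a (Suc j) powr r"
      using j assms(3) by (simp add: powr_mult)
    finally show "(b j powr r)\<^sup>2 \<le> a j powr r * a (Suc j) powr r" .
  qed
  show "\<forall>j\<in>{1..n-2}. b j powr r * b (Suc j) powr r = 0"
    using assms(2) by auto
qed simp

theorem theorem1p4:
  fixes n :: nat and a b :: "nat \<Rightarrow> real"
  assumes "n \<ge> 3"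
    and "\<forall>i\<in>{1..n}. a i \<ge> 0"
    and "\<forall>j\<in>{1..n-1}. b j \<ge> 0"
  shows "infinitely_divisible n (tridiag a b) \<longleftrightarrow>
           psd n (tridiag a b) \<and> (\<forall>i\<in>{1..n-2}. b i * b (i + 1) = 0)"
proof
  assume "infinitely_divisible n (tridiag a b)"
  then show "psd n (tridiag a b) \<and> (\<forall>i\<in>{1..n-2}. b i * b (i + 1) = 0)"
    using infinitely_divisible_imp_psd infinitely_divisible_tridiag_offdiag_mult_eq_0 by blast
next
  assume "psd n (tridiag a b) \<and> (\<forall>i\<in>{1..n-2}. b i * b (i + 1) = 0)"
  moreover have "\<forall>j\<in>{1..<n}. 0 \<le> b j"
    using assms(3) by auto
  ultimately have "psd n (hadamard_pow r (tridiag a b))" if "0 < r" for r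
    using psd_hadamard_pow_tridiag assms(2) that by simp
  moreover have "\<forall>i\<in>{1..n}. \<forall>j\<in>{1..n}. 0 \<le> tridiag a b i j \<and> tridiag a b i j = tridiag a b j i"
    using assms(2,3) by (auto simp: tridiag_def)
  ultimately show "infinitely_divisible n (tridiag a b)"
    unfolding infinitely_divisible_def by blast
qed

end
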